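(* Fix $l^0_{jk},l^0_{ki},l^0_{ij}>0$ and let $\mathcal{W}^{ijk}$ be the set of $(w_i,w_j,w_k)\in\mathbb{R}^3$ for which $l_{ab}>0$ defined by $\cosh\frac{l_{ab}}{2}=e^{w_a+w_b}\cosh\frac{l^0_{ab}}{2}$ exist for $ab\in\{jk,ki,ij\}$. For $(w_i,w_j,w_k)\in\mathcal{W}^{ijk}$, let $\theta^i_{jk},\theta^j_{ki},\theta^k_{ij}$ be the lengths of the sides opposite to the sides of lengths $l_{jk},l_{ki},l_{ij}$ in the hyperbolic right-angled hexagon whose three pairwise non-adjacent sides have lengths $l_{jk},l_{ki},l_{ij}$. Then the Jacobian matrix $\frac{\partial(\theta^i_{jk},\theta^j_{ki},\theta^k_{ij})}{\partial(w_i,w_j,w_k)}$ is negative definite.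
   Context: For any three positive numbers there is a hyperbolic right-angled hexagon, unique up to isometry, whose three pairwise non-adjacent sides have these lengths. *)

theory Defs
  imports "HOL-Analysis.Analysis"
begin

definition mink :: "real^3 \<Rightarrow> real^3 \<Rightarrow> real" where
  "mink x y = x$1 * y$1 + x$2 * y$2 - x$3 * y$3"

definition hyp_point :: "real^3 \<Rightarrow> bool" where
  "hyp_point p \<longleftrightarrow> mink p p = -1 \<and> p$3 > 0"

definition hdist :: "real^3 \<Rightarrow> real^3 \<Rightarrow> real" where
  "hdist p q = arcosh (- mink p q)"

text \<open>Tangent vector at v pointing towards u (projection of u onto the tangent plane at v).\<close>
definition tangent_towards :: "real^3 \<Rightarrow> real^3 \<Rightarrow> real^3" where
  "tangent_towards v u = u + mink u v *\<^sub>R v"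

definition right_angle_at :: "real^3 \<Rightarrow> real^3 \<Rightarrow> real^3 \<Rightarrow> bool" where
  "right_angle_at v u w \<longleftrightarrow> mink (tangent_towards v u) (tangent_towards v w) = 0"

text \<open>Determinant of three vectors; its sign tells on which side of the geodesic
  through p and q (the plane spanned by p, q) the point x lies.\<close>
definition det3 :: "real^3 \<Rightarrow> real^3 \<Rightarrow> real^3 \<Rightarrow> real" where
  "det3 p q x = p$1 * (q$2 * x$3 - q$3 * x$2) - p$2 * (q$1 * x$3 - q$3 * x$1)
              + p$3 * (q$1 * x$2 - q$2 * x$1)"

text \<open>Convexity: all other
  vertices lie strictly on the same side of the line through each side (with a common
  orientation).\<close>
definition right_angled_hexagon :: "(nat \<Rightarrow> real^3) \<Rightarrow> bool" where
  "right_angled_hexagon v \<longleftrightarrow>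
     (\<forall>i<6. hyp_point (v i)) \<and>
     (\<forall>i<6. v i \<noteq> v ((i + 1) mod 6)) \<and>
     (\<forall>i<6. right_angle_at (v i) (v ((i + 5) mod 6)) (v ((i + 1) mod 6))) \<and>
     (\<exists>s\<in>{1, -1::real}. \<forall>i<6. \<forall>j<6. j \<noteq> i \<and> j \<noteq> (i + 1) mod 6 \<longrightarrow>
          s * det3 (v i) (v ((i + 1) mod 6)) (v j) > 0)"

definition hex_side :: "(nat \<Rightarrow> real^3) \<Rightarrow> nat \<Rightarrow> real" where
  "hex_side v i = hdist (v i) (v ((i + 1) mod 6))"

text \<open>Well defined by existence and uniqueness up to isometry of such hexagons.\<close>
definition hex_opposite :: "real \<Rightarrow> real \<Rightarrow> real \<Rightarrow> real \<times> real \<times> real" where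
  "hex_opposite a1 a2 a3 = (THE t. \<exists>v. right_angled_hexagon v \<and>
      hex_side v 0 = a1 \<and> hex_side v 2 = a2 \<and> hex_side v 4 = a3 \<and>
      t = (hex_side v 3, hex_side v 5, hex_side v 1))"

text \<open>Coordinates: w$1 = w_i, w$2 = w_j, w$3 = w_k.\<close>

text \<open>l_ab > 0 with cosh (l_ab/2) = exp (w_a + w_b) * cosh (l0_ab/2) exists iff the RHS exceeds 1.\<close>
definition W_set :: "real \<Rightarrow> real \<Rightarrow> real \<Rightarrow> (real^3) set" where
  "W_set l0jk l0ki l0ij = {w. exp (w$2 + w$3) * cosh (l0jk / 2) > 1 \<and>
                             exp (w$3 + w$1) * cosh (l0ki / 2) > 1 \<and>
                             exp (w$1 + w$2) * cosh (l0ij / 2) > 1}"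

definition new_len :: "real \<Rightarrow> real \<Rightarrow> real \<Rightarrow> real" where
  "new_len l0 wa wb = 2 * arcosh (exp (wa + wb) * cosh (l0 / 2))"

definition theta_map :: "real \<Rightarrow> real \<Rightarrow> real \<Rightarrow> real^3 \<Rightarrow> real^3" where
  "theta_map l0jk l0ki l0ij w =
     (let t = hex_opposite (new_len l0jk (w$2) (w$3)) (new_len l0ki (w$3) (w$1))
                           (new_len l0ij (w$1) (w$2))
      in vector [fst t, fst (snd t), snd (snd t)])"

end

theory Submission
  imports Defs
begin

text \<open>In the hyperboloid model, give each side of the hexagon the unit normal of its line.
  Vertices are cross products of consecutive normals and vice versa, and expanding a normal in the
  basis dual to its neighbours turns the right angles into the hexagon cosine law
  cosh t1 = (cosh l2 cosh l3 + cosh l1) / (sinh l2 sinh l3) for the side t1 opposite to l1.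
  This determines the opposite sides; existence follows from three explicit normals with the
  right Gram matrix.  Along cosh (l/2) = exp (w_a + w_b) cosh (l0/2) the factor sinh l cancels
  the derivative of l, and x \<bullet> J x becomes, with c_a = cosh l_a > 1, a negative combination of
  three binary quadratic forms whose diagonal coefficients dominate the off-diagonal ones.\<close>

section \<open>The Minkowski cross product\<close>

text \<open>The cross product for the form \<open>mink\<close>: it is characterised by
  \<open>mink (mink_cross a b) c = det3 a b c\<close>.  For points of the hyperboloid it is normal to
  the geodesic through them, and for two spacelike normals it is the intersection point of the
  two lines.\<close>
definition mink_cross :: "real^3 \<Rightarrow> real^3 \<Rightarrow> real^3" where
  "mink_cross a b = vector [a$2*b$3 - a$3*b$2, a$3*b$1 - a$1*b$3, a$2*b$1 - a$1*b$2]"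

lemma mink_cross_nth [simp]:
  "mink_cross a b $ 1 = a$2*b$3 - a$3*b$2"
  "mink_cross a b $ 2 = a$3*b$1 - a$1*b$3"
  "mink_cross a b $ 3 = a$2*b$1 - a$1*b$2"
  by (simp_all add: mink_cross_def)

lemma vec3_eqI: "x$1 = y$1 \<Longrightarrow> x$2 = y$2 \<Longrightarrow> x$3 = (y::real^3)$3 \<Longrightarrow> x = y"
  by (simp add: vec_eq_iff forall_3)

lemma mink_commute: "mink a b = mink b a"
  by (simp add: mink_def mult.commute)

lemma mink_scaleR_left [simp]: "mink (r *\<^sub>R a) b = r * mink a b"
  and mink_scaleR_right [simp]: "mink a (r *\<^sub>R b) = r * mink a b"
  and mink_add_left [simp]: "mink (a + c) b = mink a b + mink c b"
  and mink_add_right [simp]: "mink a (b + c) = mink a b + mink a c"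
  and mink_minus_left [simp]: "mink (- a) b = - mink a b"
  and mink_minus_right [simp]: "mink a (- b) = - mink a b"
  by (simp_all add: mink_def algebra_simps)

lemma mink_mink_cross_left: "mink (mink_cross a b) c = det3 a b c"
  and mink_mink_cross_right: "mink c (mink_cross a b) = det3 a b c"
  by (simp_all add: mink_def det3_def algebra_simps)

lemma det3_rotate: "det3 a b c = det3 b c a"
  by (simp add: det3_def algebra_simps)

lemma det3_degenerate [simp]: "det3 a a c = 0" "det3 a b a = 0" "det3 a b b = 0"
  by (simp_all add: det3_def algebra_simps)

lemma det3_scaleR [simp]:
  "det3 (r *\<^sub>R a) b c = r * det3 a b c"
  "det3 a (r *\<^sub>R b) c = r * det3 a b c"
  "det3 a b (r *\<^sub>R c) = r * det3 a b c"
  by (simp_all add: det3_def algebra_simps)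

lemma mink_mink_cross_mink_cross:
  "mink (mink_cross a b) (mink_cross c d) = mink a d * mink b c - mink a c * mink b d"
  by (simp add: mink_def algebra_simps)

lemma mink_cross_mink_cross_left:
  "mink_cross (mink_cross a b) c = mink b c *\<^sub>R a - mink a c *\<^sub>R b"
  by (rule vec3_eqI) (simp_all add: mink_def algebra_simps)

lemma mink_cross_mink_cross_right:
  "mink_cross c (mink_cross a b) = mink a c *\<^sub>R b - mink b c *\<^sub>R a"
  by (rule vec3_eqI) (simp_all add: mink_def algebra_simps)

text \<open>Coordinates of \<open>x\<close> with respect to the basis dual to \<open>a, b, c\<close>.\<close>
lemma det3_scaleR_dual_basis:
  "det3 a b c *\<^sub>R x
     = mink x a *\<^sub>R mink_cross b c + mink x b *\<^sub>R mink_cross c a + mink x c *\<^sub>R mink_cross a b"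
  by (rule vec3_eqI) (simp_all add: mink_def det3_def algebra_simps)

lemma det3_mink_cross:
  "det3 (mink_cross c d) a b = mink (mink_cross a b) (mink_cross c d)"
  "det3 a (mink_cross c d) b = mink (mink_cross b a) (mink_cross c d)"
  "det3 a b (mink_cross c d) = mink (mink_cross a b) (mink_cross c d)"
  by (simp_all add: mink_def det3_def algebra_simps)

lemma det3_mink_cross_consecutive:
  "det3 (mink_cross a b) (mink_cross b c) (mink_cross d e) = - det3 a b c * det3 d e b"
proof -
  have "mink_cross (mink_cross a b) (mink_cross b c) = - det3 a b c *\<^sub>R b"
    unfolding mink_cross_mink_cross_left by (simp add: mink_mink_cross_right det3_rotate[of a b c])
  then show ?thesis
    by (simp add: mink_mink_cross_left[symmetric] mink_mink_cross_right)
qed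

lemma hyp_point_reverse_cauchy_schwarz:
  assumes p: "hyp_point p" and q: "hyp_point q"
  shows "- mink p q \<ge> 1" and "- mink p q = 1 \<Longrightarrow> p = q"
proof -
  define a where "a = (p$1)^2 + (p$2)^2"
  define b where "b = (q$1)^2 + (q$2)^2"
  define c where "c = p$1*q$1 + p$2*q$2"
  have p3: "(p$3)^2 = 1 + a" and q3: "(q$3)^2 = 1 + b"
    using p q by (simp_all add: a_def b_def hyp_point_def mink_def power2_eq_square)
  have pp: "p$3 > 0" "q$3 > 0" using p q by (auto simp: hyp_point_def)
  have e1: "a + b - 2*c = (p$1 - q$1)^2 + (p$2 - q$2)^2"
    by (simp add: a_def b_def c_def power2_eq_square algebra_simps)
  have e2: "a*b - c^2 = (p$1*q$2 - p$2*q$1)^2"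
    by (simp add: a_def b_def c_def power2_eq_square algebra_simps)
  have "(p$3*q$3)^2 = (1+a)*(1+b)" by (simp add: power_mult_distrib p3 q3)
  then have sq: "(p$3 * q$3)^2 - (1 + c)^2 = (a + b - 2*c) + (a*b - c^2)"
    by (simp add: power2_eq_square algebra_simps)
  have nn: "a + b - 2*c \<ge> 0" "a*b - c^2 \<ge> 0" unfolding e1 e2 by simp_all
  have mk: "- mink p q = p$3*q$3 - c" by (simp add: mink_def c_def)
  have pos: "p$3*q$3 > 0" using pp by simp
  have "p$3*q$3 \<ge> 1 + c"
  proof (cases "1 + c \<le> 0")
    case False
    have "(1+c)^2 \<le> (p$3*q$3)^2" using sq nn by linarith
    then show ?thesis using False pos by (meson abs_le_square_iff abs_of_pos le_less not_le power2_le_imp_le)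
  qed (use pos in linarith)
  then show "- mink p q \<ge> 1" using mk by linarith
  assume "- mink p q = 1"
  then have "p$3*q$3 = 1 + c" using mk by linarith
  then have "(p$3 * q$3)^2 - (1 + c)^2 = 0" by simp
  then have "a + b - 2*c = 0" using sq nn by linarith
  then have x1: "p$1 = q$1" and x2: "p$2 = q$2" unfolding e1
    by simp_all
  then have "(p$3)^2 = (q$3)^2" using p3 q3 by (simp add: a_def b_def)
  then have "p$3 = q$3" using pp by (simp add: power2_eq_iff)
  then show "p = q" using x1 x2 by (intro vec3_eqI) auto
qed

lemma mink_neg_same_sheet:
  assumes "mink p p = -1" "mink q q = -1" "mink p q < 0"
  shows "p$3 * q$3 > 0"
proof (rule ccontr)
  assume nc: "\<not> p$3 * q$3 > 0"
  define a where "a = (p$1)^2 + (p$2)^2"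
  define b where "b = (q$1)^2 + (q$2)^2"
  define c where "c = p$1*q$1 + p$2*q$2"
  have p3: "(p$3)^2 = 1 + a" and q3: "(q$3)^2 = 1 + b"
    using assms(1,2) by (simp_all add: a_def b_def mink_def power2_eq_square)
  have "a*b - c^2 = (p$1*q$2 - p$2*q$1)^2"
    by (simp add: a_def b_def c_def power2_eq_square algebra_simps)
  then have abc: "c^2 \<le> a*b" by (smt (verit) zero_le_power2)
  have ab: "a \<ge> 0" "b \<ge> 0" by (simp_all add: a_def b_def)
  have "(p$3*q$3)^2 = 1 + a + b + a*b" by (simp add: p3 q3 algebra_simps)
  then have "(p$3*q$3)^2 > c^2" using abc ab by linarith
  then have "\<bar>p$3*q$3\<bar> > \<bar>c\<bar>" using abs_le_square_iff[of "p$3*q$3" c] by linarith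
  then have "c - p$3*q$3 > 0" using nc by linarith
  moreover have "mink p q = c - p$3*q$3" by (simp add: mink_def c_def)
  ultimately show False using assms(3) by simp
qed

lemma right_angle_at_iff:
  assumes "mink v v = -1"
  shows "right_angle_at v u w \<longleftrightarrow> mink u w + mink u v * mink w v = 0"
  using assms unfolding right_angle_at_def tangent_towards_def
  by (simp add: mink_commute algebra_simps)

section \<open>The cosine law of a right-angled hexagon\<close>

text \<open>For vertices \<open>p0, \<dots>, p3\<close> with right angles at \<open>p1\<close> and \<open>p2\<close> (the Gram relations
  \<open>mink p0 p2 = - x0 * x1\<close>, \<open>mink p1 p3 = - x1 * x2\<close>), this computes the product of the normals of
  the sides \<open>p0 p1\<close> and \<open>p2 p3\<close>; the sign is fixed by convexity.\<close>
lemma mink_normals_across_side: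
  fixes p0 p1 p2 p3 :: "real^3"
  assumes h: "mink p0 p0 = -1" "mink p1 p1 = -1" "mink p2 p2 = -1" "mink p3 p3 = -1"
    and g: "mink p0 p1 = -x0" "mink p1 p2 = -x1" "mink p2 p3 = -x2"
       "mink p0 p2 = -(x0*x1)" "mink p1 p3 = -(x1*x2)"
    and x: "x0 > 1" "x1 > 1" "x2 > 1"
    and d: "det3 p0 p1 p2 * det3 p1 p2 p3 > 0"
  shows "mink (mink_cross p0 p1) (mink_cross p2 p3) = - (x1 * sqrt (x0^2-1) * sqrt (x2^2-1))"
proof -
  define N where "N = mink_cross p1 p2"
  define u where "u = mink_cross p0 p1"
  define w where "w = mink_cross p2 p3"
  define D1 where "D1 = det3 p0 p1 p2"
  define D2 where "D2 = det3 p1 p2 p3"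
  define y0 where "y0 = sqrt (x0^2-1)"
  define y1 where "y1 = sqrt (x1^2-1)"
  define y2 where "y2 = sqrt (x2^2-1)"
  have y0: "y0 > 0" "y0^2 = x0^2 - 1" using x by (simp_all add: y0_def)
  have y1: "y1 > 0" "y1^2 = x1^2 - 1" using x by (simp_all add: y1_def)
  have y2: "y2 > 0" "y2^2 = x2^2 - 1" using x by (simp_all add: y2_def)
  have NN: "mink N N = y1^2"
    unfolding N_def mink_mink_cross_mink_cross using h g y1 by (simp add: power2_eq_square mink_commute)
  have det_N: "det3 p1 p2 N = y1^2" using NN by (simp add: N_def mink_mink_cross_left)
  have eu: "y1^2 *\<^sub>R u = D1 *\<^sub>R mink_cross N p1"
  proof -
    have "mink u p1 = 0" "mink u p2 = D1" "mink u N = 0"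
      unfolding u_def N_def mink_mink_cross_mink_cross using h g
      by (simp_all add: mink_mink_cross_left D1_def)
    then show ?thesis using det3_scaleR_dual_basis[of p1 p2 N u] det_N by simp
  qed
  have ew: "y1^2 *\<^sub>R w = D2 *\<^sub>R mink_cross p2 N"
  proof -
    have "mink w p1 = D2" "mink w p2 = 0" "mink w N = 0"
      unfolding w_def N_def mink_mink_cross_mink_cross using h g
      by (simp_all add: mink_mink_cross_left mink_mink_cross_right D2_def det3_rotate[of p1] mink_commute)
    then show ?thesis using det3_scaleR_dual_basis[of p1 p2 N w] det_N by simp
  qed
  have Np: "mink N p1 = 0" "mink N p2 = 0" by (simp_all add: N_def mink_mink_cross_left)
  have k1: "mink (mink_cross N p1) (mink_cross p2 N) = - x1 * y1^2"
    and k2: "mink (mink_cross N p1) (mink_cross N p1) = y1^2"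
    and k3: "mink (mink_cross p2 N) (mink_cross p2 N) = y1^2"
    unfolding mink_mink_cross_mink_cross using NN Np g h by (simp_all add: mink_commute)
  have uu: "mink u u = y0^2" and ww: "mink w w = y2^2"
    unfolding u_def w_def mink_mink_cross_mink_cross using h g y0 y2
    by (simp_all add: mink_commute power2_eq_square)
  have y1sq: "y1^2 \<noteq> 0" using y1(1) by simp
  have "y1^2 * (y1^2 * y0^2) = y1^2 * D1^2"
    using arg_cong2[OF eu eu, of mink] uu k2 by (simp add: power2_eq_square ac_simps)
  then have D1sq: "D1^2 = y0^2 * y1^2" using y1sq by (metis mult_left_cancel mult.commute)
  have "y1^2 * (y1^2 * y2^2) = y1^2 * D2^2"
    using arg_cong2[OF ew ew, of mink] ww k3 by (simp add: power2_eq_square ac_simps)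
  then have D2sq: "D2^2 = y2^2 * y1^2" using y1sq by (metis mult_left_cancel mult.commute)
  have "(D1*D2)^2 = (y0*y1*y1*y2)^2" using D1sq D2sq by (simp add: power_mult_distrib)
  moreover have "D1*D2 > 0" using d by (simp add: D1_def D2_def)
  moreover have "y0*y1*y1*y2 > 0" using y0 y1 y2 by simp
  ultimately have DD: "D1*D2 = y0*y1*y1*y2" by (simp add: power2_eq_iff)
  have "y1^2 * (y1^2 * mink u w) = y1^2 * (y1^2 * (- x1 * y0 * y2))"
    using arg_cong2[OF eu ew, of mink] k1 DD by (simp add: power2_eq_square algebra_simps)
  then have "mink u w = - x1 * y0 * y2" using y1sq by (metis mult_left_cancel)
  then show ?thesis by (simp add: u_def w_def y0_def y2_def)
qed

text \<open>The normals \<open>a, \<dots>, e\<close> of five consecutive sides of a right-angled hexagon, scaled by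
  \<open>y = sinh\<close> of the side lengths; the hexagon law comes out of comparing \<open>mink b d\<close> with the
  expansions of \<open>b\<close> and \<open>d\<close> along \<open>mink_cross a c\<close> and \<open>mink_cross c e\<close>.\<close>
lemma hexagon_law_from_normals:
  fixes a b c d e :: "real^3"
  assumes n: "mink a a = y1^2" "mink b b = y2^2" "mink c c = y3^2" "mink d d = y4^2" "mink e e = y5^2"
    and o: "mink a b = 0" "mink b c = 0" "mink c d = 0" "mink d e = 0"
    and g: "mink a c = -(x2*y1*y3)" "mink c e = -(x4*y3*y5)" "mink e a = -(x0*y5*y1)"
       "mink b d = -(x3*y2*y4)"
    and y: "y1 > 0" "y2 > 0" "y3 > 0" "y4 > 0" "y5 > 0"
    and yx: "y2^2 = x2^2 - 1" "y4^2 = x4^2 - 1"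
    and x: "x3 > 0" "x0 + x2*x4 > 0"
  shows "x3 * y2 * y4 = x2 * x4 + x0"
proof -
  define K where "K = mink_cross a c"
  define L where "L = mink_cross c e"
  define kk where "kk = y1^2*y2^2*y3^2"
  define ll where "ll = y3^2*y4^2*y5^2"
  have KK: "mink K K = kk"
  proof -
    have "mink K K = (x2*y1*y3)^2 - y1^2*y3^2" unfolding K_def mink_mink_cross_mink_cross
      using n g by (simp add: mink_commute power2_eq_square)
    also have "\<dots> = kk" unfolding kk_def yx(1) by (simp add: algebra_simps)
    finally show ?thesis .
  qed
  have LL: "mink L L = ll"
  proof -
    have "mink L L = (x4*y3*y5)^2 - y3^2*y5^2" unfolding L_def mink_mink_cross_mink_cross
      using n g by (simp add: mink_commute power2_eq_square)
    also have "\<dots> = ll" unfolding ll_def yx(2) by (simp add: algebra_simps)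
    finally show ?thesis .
  qed
  define \<beta> where "\<beta> = mink b K"
  define \<delta> where "\<delta> = mink d L"
  have eb: "kk *\<^sub>R b = \<beta> *\<^sub>R K"
    using det3_scaleR_dual_basis[of a c K b] KK o
    by (simp add: K_def \<beta>_def mink_mink_cross_left mink_commute)
  have ed: "ll *\<^sub>R d = \<delta> *\<^sub>R L"
    using det3_scaleR_dual_basis[of c e L d] LL o
    by (simp add: L_def \<delta>_def mink_mink_cross_left mink_commute)
  have KL: "mink K L = - (y1*y3^2*y5*(x0 + x2*x4))"
    unfolding K_def L_def mink_mink_cross_mink_cross using n g
    by (simp add: mink_commute power2_eq_square algebra_simps)
  have kpos: "kk > 0" "ll > 0" using y by (simp_all add: kk_def ll_def)
  have "kk * (kk * y2^2) = kk * \<beta>^2"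
    using arg_cong2[OF eb eb, of mink] n KK by (simp add: power2_eq_square)
  then have bsq: "\<beta>^2 = kk * y2^2" using kpos by simp
  have "ll * (ll * y4^2) = ll * \<delta>^2"
    using arg_cong2[OF ed ed, of mink] n LL by (simp add: power2_eq_square)
  then have dsq: "\<delta>^2 = ll * y4^2" using kpos by simp
  have main: "kk * ll * (x3*y2*y4) = \<beta> * \<delta> * (y1*y3^2*y5*(x0 + x2*x4))"
    using arg_cong2[OF eb ed, of mink] g KL by (simp add: ac_simps)
  have "kk * ll * (x3*y2*y4) > 0" using kpos x y by simp
  then have bd: "\<beta> * \<delta> > 0" using main y x
    by (smt (verit, best) mult_nonpos_nonneg mult_pos_pos zero_less_power)
  have "(\<beta>*\<delta>)^2 = (y1*y2^2*y3^2*y4^2*y5)^2" unfolding power_mult_distrib bsq dsq kk_def ll_def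
    by (simp add: power2_eq_square algebra_simps)
  moreover have "y1*y2^2*y3^2*y4^2*y5 > 0" using y by simp
  ultimately have bd2: "\<beta>*\<delta> = y1*y2^2*y3^2*y4^2*y5" using bd by (simp add: power2_eq_iff)
  have "(y1^2*y2^2*y3^4*y4^2*y5^2) * (x3*y2*y4 - (x2*x4 + x0)) = 0"
    using main unfolding bd2 kk_def ll_def by (simp add: power2_eq_square power4_eq_xxxx algebra_simps)
  moreover have "y1^2*y2^2*y3^4*y4^2*y5^2 \<noteq> 0" using y by simp
  ultimately show ?thesis by simp
qed

lemma hexagon_law_periodic:
  fixes P :: "nat \<Rightarrow> real^3" and x :: "nat \<Rightarrow> real"
  assumes h: "\<And>k. mink (P k) (P k) = -1"
   and g1: "\<And>k. mink (P k) (P (Suc k)) = - x k"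
   and g2: "\<And>k. mink (P k) (P (Suc (Suc k))) = -(x k * x (Suc k))"
   and xg: "\<And>k. x k > 1"
   and dd: "\<And>k. det3 (P k) (P (Suc k)) (P (Suc (Suc k)))
                 * det3 (P (Suc k)) (P (Suc (Suc k))) (P (Suc (Suc (Suc k)))) > 0"
   and per: "\<And>k. P (k+6) = P k" "\<And>k. x (k+6) = x k"
  shows "x 3 * sqrt ((x 2)^2 - 1) * sqrt ((x 4)^2 - 1) = x 2 * x 4 + x 0"
proof -
  define y where "y k = sqrt ((x k)^2 - 1)" for k
  have y: "y k > 0" "(y k)^2 = (x k)^2 - 1" for k using xg[of k] by (simp_all add: y_def)
  define N where "N k = mink_cross (P k) (P (Suc k))" for k
  have NN: "mink (N k) (N k) = (y k)^2" for k
    unfolding N_def mink_mink_cross_mink_cross using h g1 y by (simp add: mink_commute power2_eq_square)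
  have NO: "mink (N k) (N (Suc k)) = 0" for k
    unfolding N_def mink_mink_cross_mink_cross using h g1 g2 by (simp add: mink_commute)
  have NQ: "mink (N k) (N (Suc (Suc k))) = - (x (Suc k) * y k * y (Suc (Suc k)))" for k
    unfolding N_def y_def by (rule mink_normals_across_side[OF h h h h g1 g1 g1 g2 g2 xg xg xg dd])
  have N7: "N 7 = N 1" using per(1)[of 1] per(1)[of 2] by (simp add: N_def numeral_eq_Suc)
  have x6: "x 6 = x 0" "y 7 = y 1" using per(2)[of 0] per(2)[of 1] by (simp_all add: y_def)
  have "x 3 * y 2 * y 4 = x 2 * x 4 + x 0"
  proof (rule hexagon_law_from_normals)
    show "mink (N 1) (N 1) = (y 1)^2" "mink (N 2) (N 2) = (y 2)^2" "mink (N 3) (N 3) = (y 3)^2"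
      "mink (N 4) (N 4) = (y 4)^2" "mink (N 5) (N 5) = (y 5)^2" using NN by auto
    show "mink (N 1) (N 2) = 0" "mink (N 2) (N 3) = 0" "mink (N 3) (N 4) = 0" "mink (N 4) (N 5) = 0"
      using NO[of 1] NO[of 2] NO[of 3] NO[of 4] by (simp_all add: numeral_eq_Suc)
    show "mink (N 1) (N 3) = -(x 2 * y 1 * y 3)" "mink (N 3) (N 5) = -(x 4 * y 3 * y 5)"
      "mink (N 2) (N 4) = -(x 3 * y 2 * y 4)"
      using NQ[of 1] NQ[of 3] NQ[of 2] by (simp_all add: numeral_eq_Suc)
    show "mink (N 5) (N 1) = -(x 0 * y 5 * y 1)"
      using NQ[of 5] N7 x6 by (simp add: numeral_eq_Suc)
    show "y 1 > 0" "y 2 > 0" "y 3 > 0" "y 4 > 0" "y 5 > 0" using y by auto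
    show "(y 2)^2 = (x 2)^2 - 1" "(y 4)^2 = (x 4)^2 - 1" using y by auto
    show "x 3 > 0" using xg[of 3] by simp
    show "x 0 + x 2 * x 4 > 0" using xg[of 0] xg[of 2] xg[of 4] by (smt (verit) mult_pos_pos)
  qed
  then show ?thesis by (simp add: y_def)
qed

lemma mod6_simps:
  "(k mod 6 + 1) mod 6 = Suc k mod 6"
  "(Suc k mod 6 + 5) mod 6 = k mod 6"
  "(Suc k mod 6 + 1) mod 6 = Suc (Suc k) mod 6"
  by presburger+

text \<open>\<open>X k\<close> is \<open>cosh\<close> of the length of side \<open>k\<close>, indices taken mod 6.\<close>
lemma right_angled_hexagon_cosine_law:
  assumes hx: "right_angled_hexagon v"
  defines "X \<equiv> \<lambda>k. - mink (v (k mod 6)) (v (Suc k mod 6))"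
  shows "X k > 1"
    and "X (m+3) * sqrt ((X (m+2))^2 - 1) * sqrt ((X (m+4))^2 - 1) = X (m+2) * X (m+4) + X m"
proof -
  define P where "P k = v (k mod 6)" for k
  have hp: "hyp_point (P k)" for k using hx unfolding right_angled_hexagon_def P_def by simp
  have h: "mink (P k) (P k) = -1" for k using hp[of k] by (simp add: hyp_point_def)
  have g1: "mink (P k) (P (Suc k)) = - X k" for k by (simp add: P_def X_def)
  have xg: "X k > 1" for k
  proof -
    have "v (k mod 6) \<noteq> v ((k mod 6 + 1) mod 6)"
      using hx unfolding right_angled_hexagon_def by simp
    then have "P k \<noteq> P (Suc k)" unfolding P_def mod6_simps .
    then have "X k \<ge> 1" "X k \<noteq> 1"
      using hyp_point_reverse_cauchy_schwarz[OF hp[of k] hp[of "Suc k"]] g1[of k] by auto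
    then show ?thesis by simp
  qed
  then show "X k > 1" .
  have g2: "mink (P k) (P (Suc (Suc k))) = -(X k * X (Suc k))" for k
  proof -
    have "right_angle_at (v (Suc k mod 6)) (v ((Suc k mod 6 + 5) mod 6)) (v ((Suc k mod 6 + 1) mod 6))"
      using hx unfolding right_angled_hexagon_def by simp
    then have "right_angle_at (P (Suc k)) (P k) (P (Suc (Suc k)))"
      unfolding mod6_simps P_def .
    then show ?thesis using right_angle_at_iff h g1[of k] g1[of "Suc k"] by (simp add: mink_commute)
  qed
  obtain s where s: "s \<in> {1, -1::real}" and cv: "\<And>i j. i<6 \<Longrightarrow> j<6 \<Longrightarrow> j \<noteq> i \<Longrightarrow>
      j \<noteq> (i + 1) mod 6 \<Longrightarrow> s * det3 (v i) (v ((i + 1) mod 6)) (v j) > 0"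
    using hx unfolding right_angled_hexagon_def by blast
  have cv2: "s * det3 (P k) (P (Suc k)) (P (Suc (Suc k))) > 0" for k
  proof -
    have "Suc (Suc k) mod 6 \<noteq> k mod 6" "Suc (Suc k) mod 6 \<noteq> (k mod 6 + 1) mod 6" by presburger+
    then have "s * det3 (v (k mod 6)) (v ((k mod 6 + 1) mod 6)) (v (Suc (Suc k) mod 6)) > 0"
      by (intro cv) auto
    then show ?thesis unfolding mod6_simps P_def .
  qed
  have dd: "det3 (P k) (P (Suc k)) (P (Suc (Suc k)))
          * det3 (P (Suc k)) (P (Suc (Suc k))) (P (Suc (Suc (Suc k)))) > 0" for k
    using s cv2[of k] cv2[of "Suc k"] by (auto simp: mult_neg_neg zero_less_mult_iff)
  have per: "P (k+6) = P k" "X (k+6) = X k" for k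
  proof -
    have "Suc (k+6) mod 6 = Suc k mod 6" by presburger
    then show "P (k+6) = P k" "X (k+6) = X k" by (simp_all add: P_def X_def)
  qed
  show "X (m+3) * sqrt ((X (m+2))^2 - 1) * sqrt ((X (m+4))^2 - 1) = X (m+2) * X (m+4) + X m"
  proof -
    have "X (3+m) * sqrt ((X (2+m))^2 - 1) * sqrt ((X (4+m))^2 - 1) = X (2+m) * X (4+m) + X (0+m)"
    proof (rule hexagon_law_periodic[where P="\<lambda>k. P (k+m)" and x="\<lambda>k. X (k+m)"])
      show "P (k+6+m) = P (k+m)" "X (k+6+m) = X (k+m)" for k
        using per[of "k+m"] by (simp_all add: ac_simps)
    qed (use h g1 g2 xg dd in auto)
    then show ?thesis by (simp add: ac_simps)
  qed
qed

section \<open>Constructing a hexagon from the normals of its sides\<close>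

text \<open>Unit normals \<open>n k\<close> of the lines carrying the sides, indexed mod 6; consecutive lines
  are perpendicular and meet at the vertex \<open>mink_cross (n (k+5)) (n k)\<close>, and \<open>X k\<close> is the
  \<open>cosh\<close> of the length of side \<open>k\<close>.  The determinant condition is the convexity of the hexagon,
  with orientation \<open>sgn D\<close>.\<close>
definition hex_vertex :: "(nat \<Rightarrow> real^3) \<Rightarrow> nat \<Rightarrow> real^3" where
  "hex_vertex n k = mink_cross (n (k+5)) (n k)"

definition hex_frame_at :: "(nat \<Rightarrow> real^3) \<Rightarrow> (nat \<Rightarrow> real) \<Rightarrow> real \<Rightarrow> nat \<Rightarrow> bool" where
  "hex_frame_at n X D k \<longleftrightarrow> mink (n k) (n k) = 1 \<and> mink (n k) (n (Suc k)) = 0 \<and>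
     mink (n k) (n (k+2)) = - X (Suc k) \<and>
     (\<forall>j\<in>{2,3,4,5}. det3 (hex_vertex n k) (hex_vertex n (Suc k)) (hex_vertex n (k+j)) * D > 0)"

lemma periodic_add_mult:
  fixes f :: "nat \<Rightarrow> 'a"
  assumes "\<And>k. f (k + p) = f k"
  shows "f (k + p * q) = f k"
proof (induction q)
  case (Suc q)
  have "k + p * Suc q = (k + p * q) + p" by simp
  then show ?case using Suc assms by metis
qed simp

lemma hex_frame_at_shift:
  assumes "hex_frame_at (\<lambda>k. n (k+m)) (\<lambda>k. X (k+m)) D k"
  shows "hex_frame_at n X D (k+m)"
  using assms unfolding hex_frame_at_def hex_vertex_def by (simp add: ac_simps)

lemma hex_vertex_gram:
  assumes frame: "\<And>k. hex_frame_at n X D k"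
    and nper: "\<And>k. n (k+6) = n k" and Xper: "\<And>k. X (k+6) = X k"
  shows "mink (hex_vertex n k) (hex_vertex n k) = -1"
    and "mink (hex_vertex n k) (hex_vertex n (Suc k)) = - X k"
    and "mink (hex_vertex n k) (hex_vertex n (Suc (Suc k))) = - (X k * X (Suc k))"
proof -
  have g: "mink (n k) (n k) = 1" "mink (n k) (n (Suc k)) = 0" "mink (n k) (n (k+2)) = - X (Suc k)" for k
    using frame[of k] unfolding hex_frame_at_def by blast+
  have n6: "n (k+6) = n k" "n (k+7) = n (Suc k)" "n (6+k) = n k" "n (7+k) = n (Suc k)" for k
    using nper[of k] nper[of "Suc k"] by (simp_all add: add.commute)
  have x6: "X (k+6) = X k" "X (6+k) = X k" for k using Xper[of k] by (simp_all add: add.commute)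
  show "mink (hex_vertex n k) (hex_vertex n k) = -1"
    unfolding hex_vertex_def mink_mink_cross_mink_cross
    using g(1)[of "k+5"] g(2)[of "k+5"] g(1)[of k] n6 by (simp add: mink_commute)
  show "mink (hex_vertex n k) (hex_vertex n (Suc k)) = - X k"
    unfolding hex_vertex_def mink_mink_cross_mink_cross
    using g(1)[of k] g(2)[of "k+5"] g(3)[of "k+5"] g(2)[of k] n6 x6
    by (simp add: mink_commute ac_simps)
  show "mink (hex_vertex n k) (hex_vertex n (Suc (Suc k))) = - (X k * X (Suc k))"
    unfolding hex_vertex_def mink_mink_cross_mink_cross
    using g(3)[of "k+5"] g(2)[of k] g(3)[of k] n6 x6 by (simp add: mink_commute ac_simps)
qed

lemma chain_same_sheet:
  fixes Q :: "nat \<Rightarrow> real^3"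
  assumes QQ: "\<And>k. mink (Q k) (Q k) = -1" and Q1: "\<And>k. mink (Q k) (Q (Suc k)) < 0"
  shows "(Q k)$3 * (Q 0)$3 > 0"
proof (induction k)
  case 0
  have "(Q 0)$3 \<noteq> 0"
  proof
    assume "(Q 0)$3 = 0"
    then have "mink (Q 0) (Q 0) \<ge> 0" by (simp add: mink_def)
    then show False using QQ[of 0] by simp
  qed
  then show ?case by (auto simp add: zero_less_mult_iff linorder_neq_iff)
next
  case (Suc k)
  have "(Q k)$3 * (Q (Suc k))$3 > 0" by (rule mink_neg_same_sheet[OF QQ QQ Q1])
  then show ?case using Suc.IH by (smt (verit) mult_neg_neg mult_pos_pos zero_less_mult_iff)
qed

lemma right_angled_hexagon_from_frame:
  fixes n :: "nat \<Rightarrow> real^3" and X :: "nat \<Rightarrow> real"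
  assumes frame: "\<And>k. hex_frame_at n X D k"
    and nper: "\<And>k. n (k+6) = n k" and Xper: "\<And>k. X (k+6) = X k"
    and X1: "\<And>k. X k > 1" and D: "D \<noteq> 0"
  shows "\<exists>v. right_angled_hexagon v \<and> (\<forall>i<6. hex_side v i = arcosh (X i))"
proof -
  define Q where "Q = hex_vertex n"
  note gram = hex_vertex_gram[OF frame nper Xper, folded Q_def]
  have convex: "det3 (Q k) (Q (Suc k)) (Q (k+j)) * D > 0" if "j \<in> {2,3,4,5}" for k j
    using frame[of k] that unfolding hex_frame_at_def Q_def by blast
  have Qper: "Q (k+6) = Q k" for k
    unfolding Q_def hex_vertex_def using nper[of "k+5"] nper[of k] by (simp add: ac_simps)
  have Qmod: "Q (k mod 6) = Q k" for k
    using periodic_add_mult[of Q 6 "k mod 6" "k div 6", OF Qper] by simp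
  have sheet: "(Q k)$3 * (Q 0)$3 > 0" for k
  proof (rule chain_same_sheet[OF gram(1)])
    show "mink (Q k) (Q (Suc k)) < 0" for k using gram(2)[of k] X1[of k] by simp
  qed
  define \<epsilon> where "\<epsilon> = (if (Q 0)$3 > 0 then 1 else (-1::real))"
  have e2: "\<epsilon> * \<epsilon> = 1" by (simp add: \<epsilon>_def)
  have ep: "\<epsilon> * (Q k)$3 > 0" for k
    using sheet[of k] by (auto simp: \<epsilon>_def zero_less_mult_iff)
  define v where "v k = \<epsilon> *\<^sub>R Q k" for k
  have vmod: "v ((i+1) mod 6) = v (Suc i)" "v ((i+5) mod 6) = v (i+5)" for i
    unfolding v_def using Qmod[of "Suc i"] Qmod[of "i+5"] by simp_all
  have vv: "mink (v k) (v k) = -1" for k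
    unfolding v_def using gram(1) e2 by (simp add: mult.assoc[symmetric])
  have v1: "mink (v k) (v (Suc k)) = - X k" for k
    unfolding v_def using gram(2) e2 by (simp add: mult.assoc[symmetric])
  have v2: "mink (v k) (v (Suc (Suc k))) = - (X k * X (Suc k))" for k
    unfolding v_def using gram(3) e2 by (simp add: mult.assoc[symmetric])
  have vper: "v (k+6) = v k" for k unfolding v_def using Qper by simp
  define s where "s = (if \<epsilon> * D > 0 then 1 else (-1::real))"
  have "\<epsilon> * D \<noteq> 0" using D e2 by auto
  then have "\<epsilon> * D > 0 \<or> \<epsilon> * D < 0" by linarith
  then have sD: "s * (\<epsilon> * D) > 0" unfolding s_def by auto
  have "right_angled_hexagon v"
    unfolding right_angled_hexagon_def
  proof (intro conjI allI impI)
    fix i :: nat assume "i < 6"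
    show "hyp_point (v i)" unfolding hyp_point_def using vv ep by (simp add: v_def)
    show "v i \<noteq> v ((i + 1) mod 6)"
    proof
      assume "v i = v ((i + 1) mod 6)"
      then have "mink (v i) (v (Suc i)) = -1" using vv vmod by simp
      then show False using v1[of i] X1[of i] by simp
    qed
    have e1: "v (Suc (i+5)) = v i" "v (Suc (Suc (i+5))) = v (Suc i)"
      using vper[of i] vper[of "Suc i"] by (simp_all add: add.commute)
    have "mink (v (i+5)) (v (Suc (Suc (i+5))))
          + mink (v (i+5)) (v (Suc (i+5))) * mink (v (Suc (Suc (i+5)))) (v (Suc (i+5))) = 0"
      using v1[of "i+5"] v1[of "Suc (i+5)"] v2[of "i+5"] by (simp add: mink_commute)
    then show "right_angle_at (v i) (v ((i + 5) mod 6)) (v ((i + 1) mod 6))"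
      unfolding e1 vmod using right_angle_at_iff[OF vv] by blast
  next
    show "\<exists>s\<in>{1, - 1}. \<forall>i<6. \<forall>j<6. j \<noteq> i \<and> j \<noteq> (i + 1) mod 6 \<longrightarrow>
            0 < s * det3 (v i) (v ((i + 1) mod 6)) (v j)"
    proof (intro bexI allI impI)
      fix i j :: nat assume ij: "i < 6" "j < 6" "j \<noteq> i \<and> j \<noteq> (i + 1) mod 6"
      define d where "d = (j + 6 - i) mod 6"
      have "i \<in> {0,1,2,3,4,5}" "j \<in> {0,1,2,3,4,5}" using ij by auto
      then have d: "d \<in> {2,3,4,5}" "j = (i+d) mod 6" using ij unfolding d_def by auto
      define T where "T = det3 (Q i) (Q (Suc i)) (Q (i+d))"
      have TD: "T * D > 0" unfolding T_def by (rule convex[OF d(1)])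
      have vj: "v j = \<epsilon> *\<^sub>R Q (i+d)" unfolding v_def d(2) Qmod ..
      have "det3 (v i) (v (Suc i)) (v j) = (\<epsilon>*\<epsilon>)*\<epsilon> * T" unfolding vj by (simp add: v_def T_def)
      then have dv: "det3 (v i) (v (Suc i)) (v j) = \<epsilon> * T" using e2 by simp
      have "(s * (\<epsilon> * T)) * (D * D) > 0"
        using mult_pos_pos[OF sD TD] by (simp add: ac_simps)
      moreover have "D * D > 0" using D not_real_square_gt_zero by blast
      ultimately have "s * (\<epsilon> * T) > 0" by (simp add: zero_less_mult_iff)
      then show "0 < s * det3 (v i) (v ((i + 1) mod 6)) (v j)" unfolding vmod dv .
    qed (simp add: s_def)
  qed
  moreover have "\<forall>i<6. hex_side v i = arcosh (X i)"
    using v1 vmod by (simp add: hex_side_def hdist_def)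
  ultimately show ?thesis by blast
qed

text \<open>Given the normals of sides 1, 3, 5, side 2 lies on the common perpendicular of lines 1 and
  3, whose normal is proportional to their cross product; similarly for sides 4 and 0.\<close>
definition hex_normals :: "real^3 \<Rightarrow> real^3 \<Rightarrow> real^3 \<Rightarrow> real \<Rightarrow> real \<Rightarrow> real \<Rightarrow> nat \<Rightarrow> real^3" where
  "hex_normals u1 u3 u5 B1 B2 B3 k = (let r = k mod 6 in
     if r = 0 then (1/B1) *\<^sub>R mink_cross u5 u1 else if r = 1 then u1 else
     if r = 2 then (1/B2) *\<^sub>R mink_cross u1 u3 else if r = 3 then u3 else
     if r = 4 then (1/B3) *\<^sub>R mink_cross u3 u5 else u5)"

definition hex_coshes :: "real \<Rightarrow> real \<Rightarrow> real \<Rightarrow> real \<Rightarrow> real \<Rightarrow> real \<Rightarrow> nat \<Rightarrow> real" where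
  "hex_coshes A1 A2 A3 B1 B2 B3 k = (let r = k mod 6 in
     if r = 0 then A1 else if r = 1 then (A1*A2+A3)/(B1*B2) else
     if r = 2 then A2 else if r = 3 then (A2*A3+A1)/(B2*B3) else
     if r = 4 then A3 else (A3*A1+A2)/(B3*B1))"

lemma mod6_add2: "((k::nat) + 2) mod 6 = (if k mod 6 < 4 then k mod 6 + 2 else k mod 6 - 4)"
  by presburger

lemma mod6_cases: "(k::nat) mod 6 \<in> {0, 1, 2, 3, 4, 5}"
  by auto

lemma hex_normals_rotate: "hex_normals p q r s t w k = hex_normals r p q w s t (k+2)"
  using mod6_cases[of k] unfolding hex_normals_def Let_def mod6_add2 by auto

lemma hex_coshes_rotate: "hex_coshes a b c x y z k = hex_coshes c a b z x y (k+2)"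
  using mod6_cases[of k] unfolding hex_coshes_def Let_def mod6_add2 by (auto simp: ac_simps)

lemma hex_normals_periodic: "hex_normals u1 u3 u5 B1 B2 B3 (k+6) = hex_normals u1 u3 u5 B1 B2 B3 k"
  and hex_coshes_periodic: "hex_coshes A1 A2 A3 B1 B2 B3 (k+6) = hex_coshes A1 A2 A3 B1 B2 B3 k"
  by (simp_all add: hex_normals_def hex_coshes_def)

lemma alternate_normals_gram:
  fixes u1 u3 u5 :: "real^3"
  assumes m: "mink u1 u1 = 1" "mink u3 u3 = 1" "mink u5 u5 = 1"
    "mink u1 u3 = -A2" "mink u3 u5 = -A3" "mink u5 u1 = -A1"
    and B: "B1 > 0" "B2 > 0" "B3 > 0" "B1^2 = A1^2 - 1" "B2^2 = A2^2 - 1" "B3^2 = A3^2 - 1"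
    and D: "det3 u1 u3 u5 = D"
  defines "n0 \<equiv> (1/B1) *\<^sub>R mink_cross u5 u1"
    and "n2 \<equiv> (1/B2) *\<^sub>R mink_cross u1 u3"
    and "n4 \<equiv> (1/B3) *\<^sub>R mink_cross u3 u5"
  shows "mink n0 n0 = 1" "mink n0 u1 = 0" "mink u5 n0 = 0" "mink u1 n2 = 0"
    "mink n0 n2 = - ((A1*A2+A3)/(B1*B2))"
    "det3 u5 n0 u1 = -B1"
    "det3 u1 n2 n0 = D/(B1*B2)"
    "det3 n2 u3 n0 = A2*D/(B1*B2)"
    "det3 u3 n4 n0 = A3*D/(B1*B3)"
    "det3 n4 u5 n0 = D/(B1*B3)"
    "det3 n0 u1 n2 = D/(B1*B2)"
    "det3 n2 u3 u1 = -B2"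
    "det3 u3 n4 u1 = -(A1+A2*A3)/B3"
    "det3 n4 u5 u1 = -(A1*A3+A2)/B3"
proof -
  have ms: "mink u3 u1 = -A2" "mink u5 u3 = -A3" "mink u1 u5 = -A1" using m by (simp_all add: mink_commute)
  have Ds: "det3 u3 u5 u1 = D" "det3 u5 u1 u3 = D" "det3 u3 u1 u5 = -D" "det3 u1 u5 u3 = -D"
    "det3 u5 u3 u1 = -D"
    using D by (simp_all add: det3_def algebra_simps)
  note S = mink_mink_cross_left[of _ _ u1] mink_mink_cross_left[of _ _ u3]
    mink_mink_cross_left[of _ _ u5] mink_mink_cross_right[of u1] mink_mink_cross_right[of u3]
    mink_mink_cross_right[of u5] det3_mink_cross mink_mink_cross_mink_cross
    mink_cross_mink_cross_left mink_cross_mink_cross_right m ms Ds D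
  have b: "B1 \<noteq> 0" "B2 \<noteq> 0" "B3 \<noteq> 0" using B by auto
  show "mink n0 n0 = 1" unfolding n0_def using B(4) b by (simp add: S power2_eq_square field_simps)
  show "mink n0 u1 = 0" "mink u5 n0 = 0" "mink u1 n2 = 0"
    unfolding n0_def n2_def by (simp_all add: S)
  show "mink n0 n2 = - ((A1*A2+A3)/(B1*B2))" unfolding n0_def n2_def using b
    by (simp add: S field_simps)
  show "det3 u5 n0 u1 = -B1"
    unfolding n0_def using B(4) b by (simp add: S power2_eq_square field_simps)
  show "det3 n2 u3 u1 = -B2"
    unfolding n2_def using B(5) b by (simp add: S power2_eq_square field_simps)
  show "det3 u1 n2 n0 = D/(B1*B2)" "det3 n2 u3 n0 = A2*D/(B1*B2)" "det3 u3 n4 n0 = A3*D/(B1*B3)"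
    "det3 n4 u5 n0 = D/(B1*B3)" "det3 n0 u1 n2 = D/(B1*B2)" "det3 u3 n4 u1 = -(A1+A2*A3)/B3"
    "det3 n4 u5 u1 = -(A1*A3+A2)/B3"
    unfolding n0_def n2_def n4_def using b by (simp_all add: S field_simps)
qed

text \<open>Unit normals of sides 1, 3, 5.  The lines of sides 1 and 3 are at distance \<open>arcosh A2\<close>, the
  prescribed length of side 2, and cyclically; \<open>B = sinh\<close> of these lengths.\<close>
locale alternate_normals =
  fixes u1 u3 u5 :: "real^3" and A1 A2 A3 B1 B2 B3 D :: real
  assumes m: "mink u1 u1 = 1" "mink u3 u3 = 1" "mink u5 u5 = 1"
    "mink u1 u3 = -A2" "mink u3 u5 = -A3" "mink u5 u1 = -A1"
    and B: "B1 > 0" "B2 > 0" "B3 > 0" "B1^2 = A1^2 - 1" "B2^2 = A2^2 - 1" "B3^2 = A3^2 - 1"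
    and A: "A1 > 0" "A2 > 0" "A3 > 0"
    and D: "det3 u1 u3 u5 = D" "D \<noteq> 0"
begin

lemma frame_at_0_1:
  assumes "k < 2"
  shows "hex_frame_at (hex_normals u1 u3 u5 B1 B2 B3) (hex_coshes A1 A2 A3 B1 B2 B3) D k"
proof -
  define n0 where "n0 = (1/B1) *\<^sub>R mink_cross u5 u1"
  define n2 where "n2 = (1/B2) *\<^sub>R mink_cross u1 u3"
  define n4 where "n4 = (1/B3) *\<^sub>R mink_cross u3 u5"
  note gram = alternate_normals_gram[OF m B(1-6) D(1), folded n0_def n2_def n4_def]
  have nv: "hex_normals u1 u3 u5 B1 B2 B3 0 = n0" "hex_normals u1 u3 u5 B1 B2 B3 1 = u1"
    "hex_normals u1 u3 u5 B1 B2 B3 2 = n2" "hex_normals u1 u3 u5 B1 B2 B3 3 = u3"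
    "hex_normals u1 u3 u5 B1 B2 B3 4 = n4" "hex_normals u1 u3 u5 B1 B2 B3 5 = u5"
    "hex_normals u1 u3 u5 B1 B2 B3 6 = n0" "hex_normals u1 u3 u5 B1 B2 B3 7 = u1"
    "hex_normals u1 u3 u5 B1 B2 B3 8 = n2" "hex_normals u1 u3 u5 B1 B2 B3 9 = u3"
    "hex_normals u1 u3 u5 B1 B2 B3 10 = n4" "hex_normals u1 u3 u5 B1 B2 B3 11 = u5"
    "hex_normals u1 u3 u5 B1 B2 B3 (Suc 0) = u1" "hex_normals u1 u3 u5 B1 B2 B3 (Suc 1) = n2"
    "hex_normals u1 u3 u5 B1 B2 B3 (Suc (Suc 0)) = n2"
    "hex_normals u1 u3 u5 B1 B2 B3 (Suc (Suc (Suc 0))) = u3"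
    by (simp_all add: hex_normals_def n0_def n2_def n4_def)
  have xv: "hex_coshes A1 A2 A3 B1 B2 B3 1 = (A1*A2+A3)/(B1*B2)" "hex_coshes A1 A2 A3 B1 B2 B3 2 = A2"
    by (simp_all add: hex_coshes_def)
  have pos: "D*D > 0" using D(2) not_real_square_gt_zero by blast
  have Bp: "B1 > 0" "B2 > 0" "B3 > 0" using B by auto
  have ci: "det3 (mink_cross a b) (mink_cross b c) (mink_cross d e) * D = - det3 a b c * det3 d e b * D"
    for a b c d e by (simp add: det3_mink_cross_consecutive)
  consider "k = 0" | "k = 1" using assms by linarith
  then show ?thesis
  proof cases
    case 1
    show ?thesis unfolding hex_frame_at_def hex_vertex_def 1
      using gram Bp pos A
      by (simp add: nv xv ci) (simp add: nv hex_coshes_def field_simps)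
  next
    case 2
    show ?thesis unfolding hex_frame_at_def hex_vertex_def 2
      using gram Bp pos A m
      by (simp add: nv xv ci) (simp add: nv hex_coshes_def field_simps,
        use mult_pos_pos[OF A(1) pos] mult_pos_pos[OF A(2) pos]
        mult_pos_pos[OF A(2) mult_pos_pos[OF A(3) pos]]
        mult_pos_pos[OF A(1) mult_pos_pos[OF A(3) pos]] in linarith)
  qed
qed

lemma rotate: "alternate_normals u3 u5 u1 A2 A3 A1 B2 B3 B1 D"
  using m B A D by unfold_locales (simp_all add: det3_rotate[of u1])

text \<open>The frame condition at 2, 3 and at 4, 5 is the one at 0, 1 for the rotated data.\<close>
lemma frame_at:
  "hex_frame_at (hex_normals u1 u3 u5 B1 B2 B3) (hex_coshes A1 A2 A3 B1 B2 B3) D k"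
proof -
  interpret r1: alternate_normals u3 u5 u1 A2 A3 A1 B2 B3 B1 D by (rule rotate)
  interpret r2: alternate_normals u5 u1 u3 A3 A1 A2 B3 B1 B2 D by (rule r1.rotate)
  have e1: "hex_normals u3 u5 u1 B2 B3 B1 = (\<lambda>k. hex_normals u1 u3 u5 B1 B2 B3 (k+2))"
    "hex_coshes A2 A3 A1 B2 B3 B1 = (\<lambda>k. hex_coshes A1 A2 A3 B1 B2 B3 (k+2))"
    by (rule ext, rule hex_normals_rotate hex_coshes_rotate)+
  have e2: "hex_normals u5 u1 u3 B3 B1 B2 = (\<lambda>k. hex_normals u1 u3 u5 B1 B2 B3 (k+4))"
    "hex_coshes A3 A1 A2 B3 B1 B2 = (\<lambda>k. hex_coshes A1 A2 A3 B1 B2 B3 (k+4))"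
    by (rule ext, simp add: hex_normals_rotate[of u5 u1 u3 B3 B1 B2]
        hex_normals_rotate[of u3 u5 u1 B2 B3 B1] hex_coshes_rotate[of A3 A1 A2 B3 B1 B2]
        hex_coshes_rotate[of A2 A3 A1 B2 B3 B1] numeral_eq_Suc)+
  have lt6: "hex_frame_at (hex_normals u1 u3 u5 B1 B2 B3) (hex_coshes A1 A2 A3 B1 B2 B3) D k"
    if "k < 6" for k
  proof -
    have plus2: "hex_frame_at (hex_normals u1 u3 u5 B1 B2 B3) (hex_coshes A1 A2 A3 B1 B2 B3) D (j+2)"
      if "j < 2" for j
      by (rule hex_frame_at_shift) (use r1.frame_at_0_1[OF that] in \<open>unfold e1\<close>)
    have plus4: "hex_frame_at (hex_normals u1 u3 u5 B1 B2 B3) (hex_coshes A1 A2 A3 B1 B2 B3) D (j+4)"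
      if "j < 2" for j
      by (rule hex_frame_at_shift) (use r2.frame_at_0_1[OF that] in \<open>unfold e2\<close>)
    consider "k < 2" | "k - 2 < 2" "k = (k - 2) + 2" | "k - 4 < 2" "k = (k - 4) + 4"
      using \<open>k < 6\<close> by linarith
    then show ?thesis
      by cases (use frame_at_0_1 in blast, metis plus2, metis plus4)
  qed
  have "(\<lambda>j. hex_normals u1 u3 u5 B1 B2 B3 (j + 6 * (k div 6))) = hex_normals u1 u3 u5 B1 B2 B3"
    "(\<lambda>j. hex_coshes A1 A2 A3 B1 B2 B3 (j + 6 * (k div 6))) = hex_coshes A1 A2 A3 B1 B2 B3"
    by (auto intro!: periodic_add_mult hex_normals_periodic hex_coshes_periodic)
  then have "hex_frame_at (\<lambda>j. hex_normals u1 u3 u5 B1 B2 B3 (j + 6 * (k div 6)))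
      (\<lambda>j. hex_coshes A1 A2 A3 B1 B2 B3 (j + 6 * (k div 6))) D (k mod 6)"
    using lt6[of "k mod 6"] by simp
  then have "hex_frame_at (hex_normals u1 u3 u5 B1 B2 B3) (hex_coshes A1 A2 A3 B1 B2 B3) D
      (k mod 6 + 6 * (k div 6))"
    by (rule hex_frame_at_shift)
  then show ?thesis by simp
qed

end

definition hex_opposite_side :: "real \<Rightarrow> real \<Rightarrow> real \<Rightarrow> real" where
  "hex_opposite_side a b c = arcosh ((cosh b * cosh c + cosh a) / (sinh b * sinh c))"

lemma cosh_gt_1: "a > 0 \<Longrightarrow> cosh (a::real) > 1"
  using cosh_real_strict_mono[of 0 a] by simp

lemma cosine_law_ratio_gt_1:
  fixes a b c :: real
  assumes "a > 0" "b > 0"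
  shows "(cosh a * cosh b + cosh c) / (sinh a * sinh b) > 1"
proof -
  have "sinh a * sinh b < cosh a * cosh b"
    using assms by (simp add: mult_strict_mono sinh_less_cosh_real)
  then have "sinh a * sinh b < cosh a * cosh b + cosh c" using cosh_real_pos[of c] by linarith
  moreover have "sinh a * sinh b > 0" using assms by simp
  ultimately show ?thesis by simp
qed

lemma right_angled_hexagon_exists:
  fixes a1 a2 a3 :: real
  assumes a: "a1 > 0" "a2 > 0" "a3 > 0"
  shows "\<exists>v. right_angled_hexagon v \<and> hex_side v 0 = a1 \<and> hex_side v 2 = a2 \<and> hex_side v 4 = a3 \<and>
      (hex_side v 3, hex_side v 5, hex_side v 1)
        = (hex_opposite_side a1 a2 a3, hex_opposite_side a2 a3 a1, hex_opposite_side a3 a1 a2)"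
proof -
  define A1 where "A1 = cosh a1" define A2 where "A2 = cosh a2" define A3 where "A3 = cosh a3"
  define B1 where "B1 = sinh a1" define B2 where "B2 = sinh a2" define B3 where "B3 = sinh a3"
  have Bp: "B1 > 0" "B2 > 0" "B3 > 0" using a by (simp_all add: B1_def B2_def B3_def)
  have A1': "A1 > 1" "A2 > 1" "A3 > 1" using a cosh_gt_1 by (simp_all add: A1_def A2_def A3_def)
  have BA: "B1^2 = A1^2 - 1" "B2^2 = A2^2 - 1" "B3^2 = A3^2 - 1"
    by (simp_all add: A1_def A2_def A3_def B1_def B2_def B3_def sinh_square_eq)
  define \<Delta> where "\<Delta> = sqrt (A1^2 + A2^2 + A3^2 + 2*A1*A2*A3 - 1)"
  have "A1^2 > 1" "A1*A2*A3 > 0" using A1' by simp_all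
  then have "A1^2 + A2^2 + A3^2 + 2*A1*A2*A3 - 1 > 0"
    using zero_le_power2[of A2] zero_le_power2[of A3] by linarith
  then have dsq: "\<Delta>^2 = A1^2 + A2^2 + A3^2 + 2*A1*A2*A3 - 1" "\<Delta> > 0"
    by (simp_all add: \<Delta>_def)
  define u1 :: "real^3" where "u1 = vector [1, 0, 0]"
  define u3 :: "real^3" where "u3 = vector [-A2, 0, B2]"
  define u5 :: "real^3" where "u5 = vector [-A1, \<Delta>/B2, (A3+A1*A2)/B2]"
  have m: "mink u1 u1 = 1" "mink u3 u3 = 1" "mink u5 u5 = 1"
    "mink u1 u3 = -A2" "mink u3 u5 = -A3" "mink u5 u1 = -A1"
  proof -
    show "mink u1 u1 = 1" "mink u1 u3 = -A2" "mink u5 u1 = -A1"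
      by (simp_all add: u1_def u3_def u5_def mink_def)
    show "mink u3 u3 = 1" using BA by (simp add: u3_def mink_def power2_eq_square)
    show "mink u3 u5 = -A3" using Bp by (simp add: u3_def u5_def mink_def field_simps)
    have "A1^2 * B2^2 + \<Delta>^2 - (A3+A1*A2)^2 = B2^2"
      unfolding dsq(1) BA by (simp add: power2_eq_square algebra_simps)
    then show "mink u5 u5 = 1" using Bp
      by (simp add: u5_def mink_def power2_eq_square field_simps)
  qed
  have D: "det3 u1 u3 u5 = - \<Delta>" using Bp by (simp add: u1_def u3_def u5_def det3_def)
  interpret alternate_normals u1 u3 u5 A1 A2 A3 B1 B2 B3 "- \<Delta>"
    using m Bp BA A1' D dsq by unfold_locales auto
  define X where "X = hex_coshes A1 A2 A3 B1 B2 B3"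
  have X1: "X k > 1" for k
  proof -
    have "(A1*A2+A3)/(B1*B2) > 1" "(A2*A3+A1)/(B2*B3) > 1" "(A3*A1+A2)/(B3*B1) > 1"
      using cosine_law_ratio_gt_1 a unfolding A1_def A2_def A3_def B1_def B2_def B3_def by auto
    then show ?thesis using A1' unfolding X_def hex_coshes_def Let_def by auto
  qed
  have "\<exists>v. right_angled_hexagon v \<and> (\<forall>i<6. hex_side v i = arcosh (X i))"
    unfolding X_def
  proof (rule right_angled_hexagon_from_frame)
    show "hex_frame_at (hex_normals u1 u3 u5 B1 B2 B3) (hex_coshes A1 A2 A3 B1 B2 B3) (- \<Delta>) k" for k
      by (rule frame_at)
  qed (use X1 dsq(2) in \<open>simp_all add: X_def hex_normals_periodic hex_coshes_periodic\<close>)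
  then obtain v where hx: "right_angled_hexagon v" and hs: "\<forall>i<6. hex_side v i = arcosh (X i)"
    by blast
  show ?thesis
  proof (intro exI conjI)
    show "right_angled_hexagon v" by (rule hx)
    show "hex_side v 0 = a1" "hex_side v 2 = a2" "hex_side v 4 = a3"
      using hs a by (simp_all add: X_def hex_coshes_def A1_def A2_def A3_def arcosh_cosh_real)
    show "(hex_side v 3, hex_side v 5, hex_side v 1)
        = (hex_opposite_side a1 a2 a3, hex_opposite_side a2 a3 a1, hex_opposite_side a3 a1 a2)"
      using hs by (simp add: X_def hex_coshes_def hex_opposite_side_def
          A1_def A2_def A3_def B1_def B2_def B3_def ac_simps)
  qed
qed

lemma right_angled_hexagon_opposite_sides:
  assumes hx: "right_angled_hexagon v"
    and s: "hex_side v 0 = a1" "hex_side v 2 = a2" "hex_side v 4 = a3"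
    and a: "a1 > 0" "a2 > 0" "a3 > 0"
  shows "(hex_side v 3, hex_side v 5, hex_side v 1)
       = (hex_opposite_side a1 a2 a3, hex_opposite_side a2 a3 a1, hex_opposite_side a3 a1 a2)"
proof -
  define X where "X = (\<lambda>k. - mink (v (k mod 6)) (v (Suc k mod 6)))"
  have law: "X k > 1"
    "X (m+3) * sqrt ((X (m+2))^2 - 1) * sqrt ((X (m+4))^2 - 1) = X (m+2) * X (m+4) + X m" for k m
    unfolding X_def by (rule right_angled_hexagon_cosine_law[OF hx])+
  have hs: "hex_side v k = arcosh (X k)" if "k < 6" for k
    using that by (simp add: hex_side_def hdist_def X_def)
  have X1: "X k \<ge> 1" for k using law(1)[of k] by linarith
  have ch: "cosh a1 = X 0" "cosh a2 = X 2" "cosh a3 = X 4"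
    using s hs[of 0] hs[of 2] hs[of 4] X1 by auto
  have sh: "sinh a1 = sqrt ((X 0)^2 - 1)" "sinh a2 = sqrt ((X 2)^2 - 1)" "sinh a3 = sqrt ((X 4)^2 - 1)"
    using s hs[of 0] hs[of 2] hs[of 4] X1 by (auto simp: sinh_arcosh_real)
  have sp: "sinh a1 > 0" "sinh a2 > 0" "sinh a3 > 0" using a by simp_all
  have per: "X 6 = X 0" "X 7 = X 1" "X 8 = X 2" by (simp_all add: X_def numeral_2_eq_2)
  have "X 3 = (cosh a2 * cosh a3 + cosh a1) / (sinh a2 * sinh a3)"
    using law(2)[of 0] sp unfolding ch sh by (simp add: numeral_2_eq_2 field_simps)
  moreover have "X 5 = (cosh a3 * cosh a1 + cosh a2) / (sinh a3 * sinh a1)"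
    using law(2)[of 2] sp unfolding ch sh by (simp add: per field_simps)
  moreover have "X 1 = (cosh a1 * cosh a2 + cosh a3) / (sinh a1 * sinh a2)"
    using law(2)[of 4] sp unfolding ch sh by (simp add: per field_simps)
  ultimately show ?thesis using hs[of 3] hs[of 5] hs[of 1] by (simp add: hex_opposite_side_def)
qed

lemma hex_opposite_eq:
  assumes "a1 > 0" "a2 > 0" "a3 > 0"
  shows "hex_opposite a1 a2 a3
       = (hex_opposite_side a1 a2 a3, hex_opposite_side a2 a3 a1, hex_opposite_side a3 a1 a2)"
  unfolding hex_opposite_def
proof (rule the_equality)
  show "\<exists>v. right_angled_hexagon v \<and> hex_side v 0 = a1 \<and> hex_side v 2 = a2 \<and> hex_side v 4 = a3 \<and>
      (hex_opposite_side a1 a2 a3, hex_opposite_side a2 a3 a1, hex_opposite_side a3 a1 a2)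
        = (hex_side v 3, hex_side v 5, hex_side v 1)"
    using right_angled_hexagon_exists[OF assms] by metis
qed (use right_angled_hexagon_opposite_sides assms in blast)

section \<open>Differentiating the opposite sides\<close>

lemma has_derivative_vector3:
  assumes "(f1 has_derivative f1') F" "(f2 has_derivative f2') F" "(f3 has_derivative f3') F"
  shows "((\<lambda>x. vector [f1 x, f2 x, f3 x] :: real^3) has_derivative
           (\<lambda>h. vector [f1' h, f2' h, f3' h])) F"
proof -
  have axis: "(vector [a, b, c] :: real^3) = a *\<^sub>R axis 1 1 + b *\<^sub>R axis 2 1 + c *\<^sub>R axis 3 1"
    for a b c :: real
    by (rule vec3_eqI) (simp_all add: axis_def)
  show ?thesis
    unfolding axis by (intro has_derivative_add has_derivative_scaleR_left assms)
qed

lemma cosine_law_sqrt: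
  fixes c1 c2 c3 s2 s3 :: real
  assumes "s2 > 0" "s3 > 0" "s2^2 = c2^2 - 1" "s3^2 = c3^2 - 1"
  shows "sqrt (((c2*c3 + c1)/(s2 * s3))^2 - 1) = sqrt (c1^2 + c2^2 + c3^2 + 2*c1*c2*c3 - 1) / (s2 * s3)"
proof -
  have "(c2*c3 + c1)^2 - (s2 * s3)^2 = c1^2 + c2^2 + c3^2 + 2*c1*c2*c3 - 1"
    unfolding power_mult_distrib assms(3,4) by (simp add: power2_eq_square algebra_simps)
  then have "((c2*c3 + c1)/(s2 * s3))^2 - 1 = (c1^2 + c2^2 + c3^2 + 2*c1*c2*c3 - 1) / (s2 * s3)^2"
    using assms(1,2) by (simp add: field_simps power2_eq_square)
  then show ?thesis using assms(1,2) by (simp add: real_sqrt_divide)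
qed

text \<open>The quotient rule for \<open>arcosh ((c2 c3 + c1) / (s2 s3))\<close>, simplified with
  \<open>s\<^sup>2 = c\<^sup>2 - 1\<close>.\<close>
lemma cosine_law_quotient_rule:
  fixes c1 c2 c3 s1 s2 s3 d1 d2 d3 :: real
  assumes s: "s2 > 0" "s3 > 0" "s2^2 = c2^2 - 1" "s3^2 = c3^2 - 1"
    and \<Delta>: "\<Delta> = sqrt (c1^2 + c2^2 + c3^2 + 2*c1*c2*c3 - 1)" "\<Delta> > 0"
  shows "((c2 * (d3 * s3) + d2 * s2 * c3 + d1 * s1) * (s2 * s3) - (c2*c3 + c1) * (s2 * (d3 * c3) + d2 * c2 * s3))
           / ((s2 * s3) * (s2 * s3)) * (1 / sqrt (((c2*c3 + c1)/(s2 * s3))^2 - 1))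
       = (s1 * d1 - (c3 + c1 * c2) / s2 * d2 - (c2 + c1 * c3) / s3 * d3) / \<Delta>"
proof -
  have "(c2 * (d3 * s3) + d2 * s2 * c3 + d1 * s1) * (s2 * s3) - (c2*c3 + c1) * (s2 * (d3 * c3) + d2 * c2 * s3)
      - (s3 * s2 * s1 * d1 - s3 * (c3 + c1*c2) * d2 - s2 * (c2 + c1*c3) * d3)
      = d2 * s3 * c3 * (s2^2 - (c2^2 - 1)) + d3 * s2 * c2 * (s3^2 - (c3^2 - 1))"
    by (simp add: power2_eq_square algebra_simps)
  then have num: "(c2 * (d3 * s3) + d2 * s2 * c3 + d1 * s1) * (s2 * s3) - (c2*c3 + c1) * (s2 * (d3 * c3) + d2 * c2 * s3)
      = s3 * s2 * s1 * d1 - s3 * (c3 + c1*c2) * d2 - s2 * (c2 + c1*c3) * d3"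
    using s by simp
  have "s3 * s2 * s1 * d1 - s3 * (c3 + c1*c2) * d2 - s2 * (c2 + c1*c3) * d3
         = (s2 * s3) * (s1 * d1 - (c3 + c1 * c2) / s2 * d2 - (c2 + c1 * c3) / s3 * d3)"
    using s(1,2) by (simp add: field_simps)
  then show ?thesis
    unfolding num cosine_law_sqrt[OF s] \<Delta>(1)[symmetric] using s(1,2) \<Delta>(2) by (simp add: field_simps)
qed

lemma has_derivative_hex_opposite_side:
  fixes L1 L2 L3 :: "'a::real_normed_vector \<Rightarrow> real"
  assumes d: "(L1 has_derivative D1) (at w)" "(L2 has_derivative D2) (at w)" "(L3 has_derivative D3) (at w)"
    and p: "L1 w > 0" "L2 w > 0" "L3 w > 0"
  defines "c1 \<equiv> cosh (L1 w)" and "c2 \<equiv> cosh (L2 w)" and "c3 \<equiv> cosh (L3 w)"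
  shows "((\<lambda>x. hex_opposite_side (L1 x) (L2 x) (L3 x)) has_derivative
    (\<lambda>h. (sinh (L1 w) * D1 h - (c3 + c1 * c2) / sinh (L2 w) * D2 h - (c2 + c1 * c3) / sinh (L3 w) * D3 h)
         / sqrt (c1^2 + c2^2 + c3^2 + 2 * c1 * c2 * c3 - 1))) (at w)"
proof -
  define s1 where "s1 = sinh (L1 w)"
  define s2 where "s2 = sinh (L2 w)"
  define s3 where "s3 = sinh (L3 w)"
  have sp: "s2 > 0" "s3 > 0" using p by (simp_all add: s2_def s3_def)
  have sc: "s2^2 = c2^2 - 1" "s3^2 = c3^2 - 1" by (simp_all add: s2_def s3_def c2_def c3_def sinh_square_eq)
  have cosh': "((\<lambda>x. cosh (L x)) has_derivative (\<lambda>h. D h * sinh (L w))) (at w)"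
    and sinh': "((\<lambda>x. sinh (L x)) has_derivative (\<lambda>h. D h * cosh (L w))) (at w)"
    if "(L has_derivative D) (at w)" for L :: "'a \<Rightarrow> real" and D
    using DERIV_compose_FDERIV[OF has_field_derivative_cosh[OF DERIV_ident] that]
      DERIV_compose_FDERIV[OF has_field_derivative_sinh[OF DERIV_ident] that] by simp_all
  have num: "((\<lambda>x. cosh (L2 x) * cosh (L3 x) + cosh (L1 x)) has_derivative
      (\<lambda>h. c2 * (D3 h * s3) + D2 h * s2 * c3 + D1 h * s1)) (at w)"
    unfolding c2_def c3_def s1_def s2_def s3_def by (intro has_derivative_add has_derivative_mult cosh' d)
  have den: "((\<lambda>x. sinh (L2 x) * sinh (L3 x)) has_derivative
      (\<lambda>h. s2 * (D3 h * c3) + D2 h * c2 * s3)) (at w)"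
    unfolding c2_def c3_def s2_def s3_def by (intro has_derivative_mult sinh' d)
  have ratio_gt_1: "(c2*c3 + c1)/(s2 * s3) > 1"
    unfolding c1_def c2_def c3_def s2_def s3_def by (rule cosine_law_ratio_gt_1[OF p(2,3)])
  have arcosh': "(arcosh has_real_derivative (1 / sqrt (((c2*c3 + c1)/(s2 * s3))^2 - 1)))
      (at ((cosh (L2 w) * cosh (L3 w) + cosh (L1 w)) / (sinh (L2 w) * sinh (L3 w))))"
    using arcosh_real_has_field_derivative[OF ratio_gt_1] by (simp add: c1_def c2_def c3_def s2_def s3_def)
  have \<Delta>: "sqrt (c1^2 + c2^2 + c3^2 + 2*c1*c2*c3 - 1) > 0"
  proof -
    have "((c2*c3 + c1)/(s2 * s3))^2 > 1" using ratio_gt_1 by simp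
    then have "sqrt (c1^2 + c2^2 + c3^2 + 2*c1*c2*c3 - 1) / (s2 * s3) > 0"
      unfolding cosine_law_sqrt[OF sp sc, symmetric] by simp
    from mult_pos_pos[OF this mult_pos_pos[OF sp]] sp show ?thesis by simp
  qed
  have "((\<lambda>x. hex_opposite_side (L1 x) (L2 x) (L3 x)) has_derivative
      (\<lambda>h. ((c2 * (D3 h * s3) + D2 h * s2 * c3 + D1 h * s1) * (s2 * s3)
              - (c2*c3 + c1) * (s2 * (D3 h * c3) + D2 h * c2 * s3))
           / ((s2 * s3) * (s2 * s3)) * (1 / sqrt (((c2*c3 + c1)/(s2 * s3))^2 - 1)))) (at w)"
    unfolding hex_opposite_side_def
    using DERIV_compose_FDERIV[OF arcosh' has_derivative_divide'[OF num den]] sp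
    by (simp add: c1_def c2_def c3_def s1_def s2_def s3_def)
  then show ?thesis
    unfolding s1_def[symmetric] s2_def[symmetric] s3_def[symmetric]
    by (rule has_derivative_eq_rhs) (rule ext, rule cosine_law_quotient_rule[OF sp sc refl \<Delta>])
qed

lemma cosh_new_len: "exp (wa + wb) * cosh (l0/2) > 1 \<Longrightarrow>
   cosh (new_len l0 wa wb) = 2 * (exp (wa + wb) * cosh (l0/2))^2 - 1"
  unfolding new_len_def by (simp add: cosh_double_cosh)

lemma sinh_new_len: "exp (wa + wb) * cosh (l0/2) > 1 \<Longrightarrow>
   sinh (new_len l0 wa wb) = 2 * sqrt ((exp (wa + wb) * cosh (l0/2))^2 - 1) * (exp (wa + wb) * cosh (l0/2))"
  unfolding new_len_def by (simp add: sinh_double sinh_arcosh_real)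

lemma new_len_pos: "exp (wa + wb) * cosh (l0/2) > 1 \<Longrightarrow> new_len l0 wa wb > 0"
  unfolding new_len_def by simp

lemma has_derivative_new_len:
  fixes w :: "real^3" and i j :: 3
  assumes y1: "exp (w$i + w$j) * cosh (l0/2) > 1"
  defines "y \<equiv> exp (w$i + w$j) * cosh (l0/2)"
  shows "((\<lambda>x. new_len l0 (x$i) (x$j)) has_derivative
     (\<lambda>h. 2 * y / sqrt (y^2 - 1) * (h$i + h$j))) (at w)"
proof -
  have "((\<lambda>x. x$i + x$j) has_derivative (\<lambda>h. h$i + h$j)) (at w)"
    by (intro has_derivative_add bounded_linear_imp_has_derivative bounded_linear_vec_nth)
  then have "((\<lambda>x. exp (x$i + x$j) * cosh (l0/2)) has_derivative (\<lambda>h. (h$i + h$j) * y)) (at w)"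
    using has_derivative_mult_left[OF DERIV_compose_FDERIV[OF DERIV_exp]] by (simp add: y_def ac_simps)
  from DERIV_compose_FDERIV[OF arcosh_real_has_field_derivative[OF y1, of UNIV] this]
  have "((\<lambda>x. 2 * arcosh (exp (x$i + x$j) * cosh (l0/2))) has_derivative
      (\<lambda>h. 2 * ((h$i + h$j) * y * (1 / sqrt (y^2 - 1))))) (at w)"
    unfolding y_def by (rule has_derivative_mult_right)
  then show ?thesis unfolding new_len_def by (rule has_derivative_eq_rhs) (auto simp: field_simps)
qed

text \<open>With \<open>cosh (l/2) = y\<close> the derivative \<open>2 y / sqrt (y\<^sup>2 - 1)\<close> of \<open>l\<close> with respect to
  \<open>w_a + w_b\<close> cancels against \<open>sinh l\<close>.\<close>
lemma new_len_deriv_sinh: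
  assumes "exp (wa + wb) * cosh (l0/2) > 1"
  defines "y \<equiv> exp (wa + wb) * cosh (l0/2)" and "l \<equiv> new_len l0 wa wb"
  shows "sinh l * (2 * y / sqrt (y^2 - 1) * u) = 2 * (cosh l + 1) * u"
    and "x / sinh l * (2 * y / sqrt (y^2 - 1) * u) = 2 * (x / (cosh l - 1)) * u"
proof -
  have y: "y > 1" using assms(1) by (simp add: y_def)
  have q: "sqrt (y^2 - 1) > 0" "(sqrt (y^2 - 1))^2 = y^2 - 1"
    using y by (simp_all add: less_imp_le)
  have cs: "cosh l = 2 * y^2 - 1" "sinh l = 2 * sqrt (y^2 - 1) * y"
    using assms(1) unfolding l_def y_def by (simp_all add: cosh_new_len sinh_new_len)
  show "sinh l * (2 * y / sqrt (y^2 - 1) * u) = 2 * (cosh l + 1) * u"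
    using q y unfolding cs by (simp add: field_simps power2_eq_square)
  show "x / sinh l * (2 * y / sqrt (y^2 - 1) * u) = 2 * (x / (cosh l - 1)) * u"
    using q y unfolding cs by (simp add: field_simps power2_eq_square)
qed

text \<open>The derivative of the side opposite to \<open>l_1\<close>, in terms of \<open>c_a = cosh l_a\<close> and the
  increments \<open>u_a\<close> of the sums \<open>w_b + w_c\<close>.\<close>
definition theta_differential :: "real \<Rightarrow> real \<Rightarrow> real \<Rightarrow> real \<Rightarrow> real \<Rightarrow> real \<Rightarrow> real" where
  "theta_differential c1 c2 c3 u1 u2 u3 =
     2 * ((c1 + 1) * u1 - (c3 + c1*c2) / (c2 - 1) * u2 - (c2 + c1*c3) / (c3 - 1) * u3)
       / sqrt (c1^2 + c2^2 + c3^2 + 2*c1*c2*c3 - 1)"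

lemma has_derivative_theta_component:
  fixes w :: "real^3" and i j k :: 3
  assumes y: "exp (w$j + w$k) * cosh (l1/2) > 1" "exp (w$k + w$i) * cosh (l2/2) > 1"
    "exp (w$i + w$j) * cosh (l3/2) > 1"
  defines "c1 \<equiv> cosh (new_len l1 (w$j) (w$k))" and "c2 \<equiv> cosh (new_len l2 (w$k) (w$i))"
    and "c3 \<equiv> cosh (new_len l3 (w$i) (w$j))"
  shows "((\<lambda>x. hex_opposite_side (new_len l1 (x$j) (x$k)) (new_len l2 (x$k) (x$i)) (new_len l3 (x$i) (x$j)))
    has_derivative (\<lambda>h. theta_differential c1 c2 c3 (h$j + h$k) (h$k + h$i) (h$i + h$j))) (at w)"
proof -
  note d = has_derivative_new_len[OF y(1)] has_derivative_new_len[OF y(2)] has_derivative_new_len[OF y(3)]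
  show ?thesis
    using has_derivative_hex_opposite_side[OF d new_len_pos[OF y(1)] new_len_pos[OF y(2)] new_len_pos[OF y(3)]]
    unfolding new_len_deriv_sinh(1)[OF y(1)] new_len_deriv_sinh(2)[OF y(2)] new_len_deriv_sinh(2)[OF y(3)]
    by (rule has_derivative_eq_rhs) (simp add: fun_eq_iff theta_differential_def c1_def c2_def c3_def
        algebra_simps)
qed

section \<open>Negative definiteness\<close>

lemma binary_form_pos:
  fixes a b c x y :: real
  assumes abc: "a > 1" "b > 1" "c > 1" and xy: "x \<noteq> 0 \<or> y \<noteq> 0"
  shows "(b + a*c) * x^2 + (a + b*c) * y^2 - 2 * (c - a - b - 1) * x * y > 0"
proof -
  define M where "M = c - a - b - 1"
  have P: "b + a*c > \<bar>M\<bar>"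
  proof -
    have "(b + a*c) - M = c*(a - 1) + a + 2*b + 1" "(b + a*c) + M = (a + 1)*(c - 1)"
      by (simp_all add: M_def algebra_simps)
    moreover have "c*(a - 1) > 0" "(a + 1)*(c - 1) > 0" using abc by simp_all
    ultimately show ?thesis using abc unfolding abs_less_iff by linarith
  qed
  have R: "a + b*c > \<bar>M\<bar>"
  proof -
    have "(a + b*c) - M = c*(b - 1) + 2*a + b + 1" "(a + b*c) + M = (b + 1)*(c - 1)"
      by (simp_all add: M_def algebra_simps)
    moreover have "c*(b - 1) > 0" "(b + 1)*(c - 1) > 0" using abc by simp_all
    ultimately show ?thesis using abc unfolding abs_less_iff by linarith
  qed
  have "M * (x * y) \<le> \<bar>M\<bar> * \<bar>x * y\<bar>" by (metis abs_ge_self abs_mult)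
  also have "\<dots> \<le> \<bar>M\<bar> * ((x^2 + y^2) / 2)"
    using sum_squares_bound[of "\<bar>x\<bar>" "\<bar>y\<bar>"] by (intro mult_left_mono) (simp_all add: abs_mult)
  finally have "2 * M * x * y \<le> \<bar>M\<bar> * x^2 + \<bar>M\<bar> * y^2" by (simp add: algebra_simps)
  moreover have "(b + a*c - \<bar>M\<bar>) * x^2 + (a + b*c - \<bar>M\<bar>) * y^2 > 0"
    using P R xy by (auto intro: add_pos_nonneg add_nonneg_pos)
  ultimately show ?thesis unfolding M_def[symmetric] by (simp add: algebra_simps)
qed

lemma cyclic_form_identity:
  fixes c1 c2 c3 x1 x2 x3 :: real
  assumes "c1 \<noteq> 1" "c2 \<noteq> 1" "c3 \<noteq> 1"
  shows "x1 * ((c1 + 1) * (x2 + x3) - (c3 + c1*c2) / (c2 - 1) * (x3 + x1) - (c2 + c1*c3) / (c3 - 1) * (x1 + x2))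
       + x2 * ((c2 + 1) * (x3 + x1) - (c1 + c2*c3) / (c3 - 1) * (x1 + x2) - (c3 + c2*c1) / (c1 - 1) * (x2 + x3))
       + x3 * ((c3 + 1) * (x1 + x2) - (c2 + c3*c1) / (c1 - 1) * (x2 + x3) - (c1 + c3*c2) / (c2 - 1) * (x3 + x1))
     = - (((c2 + c1*c3)*x1^2 + (c1 + c2*c3)*x2^2 - 2*(c3 - c1 - c2 - 1)*x1*x2) / (c3 - 1)
        + ((c1 + c3*c2)*x3^2 + (c3 + c1*c2)*x1^2 - 2*(c2 - c3 - c1 - 1)*x3*x1) / (c2 - 1)
        + ((c3 + c2*c1)*x2^2 + (c2 + c3*c1)*x3^2 - 2*(c1 - c2 - c3 - 1)*x2*x3) / (c1 - 1))"
proof -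
  define a b c where "a = c1 - 1" and "b = c2 - 1" and "c = c3 - 1"
  have "a \<noteq> 0" "b \<noteq> 0" "c \<noteq> 0" using assms by (simp_all add: a_def b_def c_def)
  moreover have "c1 = a + 1" "c2 = b + 1" "c3 = c + 1" by (simp_all add: a_def b_def c_def)
  ultimately show ?thesis by (simp add: field_simps power2_eq_square)
qed

lemma theta_differential_form_neg:
  fixes c1 c2 c3 x1 x2 x3 :: real
  assumes c: "c1 > 1" "c2 > 1" "c3 > 1" and x: "x1 \<noteq> 0 \<or> x2 \<noteq> 0 \<or> x3 \<noteq> 0"
  shows "x1 * theta_differential c1 c2 c3 (x2 + x3) (x3 + x1) (x1 + x2)
       + x2 * theta_differential c2 c3 c1 (x3 + x1) (x1 + x2) (x2 + x3)
       + x3 * theta_differential c3 c1 c2 (x1 + x2) (x2 + x3) (x3 + x1) < 0"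
proof -
  define N3 where "N3 = (c2 + c1*c3)*x1^2 + (c1 + c2*c3)*x2^2 - 2*(c3 - c1 - c2 - 1)*x1*x2"
  define N2 where "N2 = (c1 + c3*c2)*x3^2 + (c3 + c1*c2)*x1^2 - 2*(c2 - c3 - c1 - 1)*x3*x1"
  define N1 where "N1 = (c3 + c2*c1)*x2^2 + (c2 + c3*c1)*x3^2 - 2*(c1 - c2 - c3 - 1)*x2*x3"
  define \<Delta> where "\<Delta> = sqrt (c1^2 + c2^2 + c3^2 + 2*c1*c2*c3 - 1)"
  have "c1^2 > 1" "c1*c2*c3 > 0" using c by simp_all
  then have "c1^2 + c2^2 + c3^2 + 2*c1*c2*c3 - 1 > 0"
    using zero_le_power2[of c2] zero_le_power2[of c3] by linarith
  then have \<Delta>: "\<Delta> > 0" by (simp add: \<Delta>_def)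
  have "c1 \<noteq> 1" "c2 \<noteq> 1" "c3 \<noteq> 1" using c by simp_all
  note identity = cyclic_form_identity[OF this, of x1 x2 x3, folded N1_def N2_def N3_def]
  have rotate: "sqrt (c2^2 + c3^2 + c1^2 + 2*c2*c3*c1 - 1) = \<Delta>"
    "sqrt (c3^2 + c1^2 + c2^2 + 2*c3*c1*c2 - 1) = \<Delta>"
    unfolding \<Delta>_def by (simp_all add: ac_simps)
  have factor: "x1 * (2 * r1 / \<Delta>) + x2 * (2 * r2 / \<Delta>) + x3 * (2 * r3 / \<Delta>)
      = (2 / \<Delta>) * (x1 * r1 + x2 * r2 + x3 * r3)" for r1 r2 r3
    by (simp add: divide_simps distrib_left)
  have "x1 * theta_differential c1 c2 c3 (x2 + x3) (x3 + x1) (x1 + x2)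
       + x2 * theta_differential c2 c3 c1 (x3 + x1) (x1 + x2) (x2 + x3)
       + x3 * theta_differential c3 c1 c2 (x1 + x2) (x2 + x3) (x3 + x1)
       = - (2 / \<Delta>) * (N3 / (c3 - 1) + N2 / (c2 - 1) + N1 / (c1 - 1))"
    unfolding theta_differential_def \<Delta>_def[symmetric] rotate factor identity
    by (simp add: add_divide_distrib diff_divide_distrib)
  moreover have "N3 / (c3 - 1) + N2 / (c2 - 1) + N1 / (c1 - 1) > 0"
  proof -
    have N3: "N3 > 0" if "x1 \<noteq> 0 \<or> x2 \<noteq> 0"
      unfolding N3_def by (rule binary_form_pos) (use c that in auto)
    have N2: "N2 > 0" if "x3 \<noteq> 0 \<or> x1 \<noteq> 0"
      unfolding N2_def by (rule binary_form_pos) (use c that in auto)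
    have N1: "N1 > 0" if "x2 \<noteq> 0 \<or> x3 \<noteq> 0"
      unfolding N1_def by (rule binary_form_pos) (use c that in auto)
    have "N3 \<ge> 0" "N2 \<ge> 0" "N1 \<ge> 0"
      using N1 N2 N3 by (force simp: N1_def N2_def N3_def)+
    then have "N3 / (c3 - 1) \<ge> 0" "N2 / (c2 - 1) \<ge> 0" "N1 / (c1 - 1) \<ge> 0" using c by simp_all
    moreover have "N3 / (c3 - 1) > 0 \<or> N2 / (c2 - 1) > 0" using x N3 N2 c by auto
    ultimately show ?thesis by linarith
  qed
  ultimately show ?thesis using \<Delta> by simp
qed

lemma open_W_set: "open (W_set l0jk l0ki l0ij)"
  unfolding W_set_def by (intro open_Collect_conj open_Collect_less continuous_intros)

lemma theta_map_eq:
  assumes "w \<in> W_set l0jk l0ki l0ij"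
  defines "l1 \<equiv> new_len l0jk (w$2) (w$3)" and "l2 \<equiv> new_len l0ki (w$3) (w$1)"
    and "l3 \<equiv> new_len l0ij (w$1) (w$2)"
  shows "theta_map l0jk l0ki l0ij w = vector [hex_opposite_side l1 l2 l3,
           hex_opposite_side l2 l3 l1, hex_opposite_side l3 l1 l2]"
  using assms hex_opposite_eq[of l1 l2 l3]
  by (simp add: W_set_def theta_map_def new_len_pos)

lemma has_derivative_theta_map:
  assumes w: "w \<in> W_set l0jk l0ki l0ij"
  defines "c1 \<equiv> cosh (new_len l0jk (w$2) (w$3))" and "c2 \<equiv> cosh (new_len l0ki (w$3) (w$1))"
    and "c3 \<equiv> cosh (new_len l0ij (w$1) (w$2))"
  shows "(theta_map l0jk l0ki l0ij has_derivative (\<lambda>h. vector [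
      theta_differential c1 c2 c3 (h$2 + h$3) (h$3 + h$1) (h$1 + h$2),
      theta_differential c2 c3 c1 (h$3 + h$1) (h$1 + h$2) (h$2 + h$3),
      theta_differential c3 c1 c2 (h$1 + h$2) (h$2 + h$3) (h$3 + h$1)])) (at w)"
    (is "(_ has_derivative ?J) _")
proof (rule has_derivative_transform_within_open[OF _ open_W_set w])
  have "exp (w$2 + w$3) * cosh (l0jk/2) > 1" "exp (w$3 + w$1) * cosh (l0ki/2) > 1"
    "exp (w$1 + w$2) * cosh (l0ij/2) > 1"
    using w by (simp_all add: W_set_def)
  then show "((\<lambda>x. vector [
      hex_opposite_side (new_len l0jk (x$2) (x$3)) (new_len l0ki (x$3) (x$1)) (new_len l0ij (x$1) (x$2)),
      hex_opposite_side (new_len l0ki (x$3) (x$1)) (new_len l0ij (x$1) (x$2)) (new_len l0jk (x$2) (x$3)),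
      hex_opposite_side (new_len l0ij (x$1) (x$2)) (new_len l0jk (x$2) (x$3)) (new_len l0ki (x$3) (x$1))])
    has_derivative ?J) (at w)"
    unfolding c1_def c2_def c3_def by (intro has_derivative_vector3 has_derivative_theta_component)
qed (simp add: theta_map_eq)

lemma inner_real3: "(x::real^3) \<bullet> y = x$1 * y$1 + x$2 * y$2 + x$3 * y$3"
  by (simp add: inner_vec_def sum_3)

theorem lemma3:
  fixes l0jk l0ki l0ij :: real and w :: "real^3"
  assumes "l0jk > 0" and "l0ki > 0" and "l0ij > 0"
    and "w \<in> W_set l0jk l0ki l0ij"
  shows "\<exists>J. (theta_map l0jk l0ki l0ij has_derivative J) (at w) \<and>
             (\<forall>x. x \<noteq> 0 \<longrightarrow> x \<bullet> J x < 0)"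
proof -
  define c1 where "c1 = cosh (new_len l0jk (w$2) (w$3))"
  define c2 where "c2 = cosh (new_len l0ki (w$3) (w$1))"
  define c3 where "c3 = cosh (new_len l0ij (w$1) (w$2))"
  define J where "J h = (vector [theta_differential c1 c2 c3 (h$2 + h$3) (h$3 + h$1) (h$1 + h$2),
      theta_differential c2 c3 c1 (h$3 + h$1) (h$1 + h$2) (h$2 + h$3),
      theta_differential c3 c1 c2 (h$1 + h$2) (h$2 + h$3) (h$3 + h$1)] :: real^3)" for h :: "real^3"
  have "(theta_map l0jk l0ki l0ij has_derivative J) (at w)"
    unfolding J_def c1_def c2_def c3_def by (rule has_derivative_theta_map[OF assms(4)])
  moreover have "x \<bullet> J x < 0" if "x \<noteq> 0" for x
  proof -
    have "c1 > 1" "c2 > 1" "c3 > 1"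
      using assms(4) by (simp_all add: W_set_def c1_def c2_def c3_def cosh_gt_1 new_len_pos)
    moreover have "x$1 \<noteq> 0 \<or> x$2 \<noteq> 0 \<or> x$3 \<noteq> 0" using that vec3_eqI[of x 0] by auto
    ultimately show ?thesis
      unfolding inner_real3 J_def by (simp add: theta_differential_form_neg)
  qed
  ultimately show ?thesis by blast
qed

end
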